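(* Let $n$ and $m$ be integers with $n\geq 5$ and $m\geq 5$. Let $G\in T_{n,m}$, and let $v$ be a vertex of $G$ of degree $1$ whose unique neighbor is the terminal $s$. If $G-sv$ is complete, then there exists $H\in T_{n,m}$ that is $3$-stronger than $G$.
   Context: All graphs are finite, simple and undirected. A two-terminal graph is a graph $G$ together with two distinguished vertices $s,t$ (the terminals). $T_{n,m}$ denotes the set of all pairwise nonisomorphic (with isomorphisms preserving the set of terminals) two-terminal graphs with $n$ vertices and $m$ edges. A two-terminal graph is called complete if the connected component containing both terminals is a complete graph. $G-sv$ is the two-terminal graph obtained from $G$ by deleting the edge $sv$. For a positive integer $d$, a $d$-pathset of a two-terminal graph $G$ is a spanning subgraph of $G$ containing a path of length (number of edges) at most $d$ joining $s$ and $t$; $N_i^d(G)$ is the number of $d$-pathsets of $G$ with exactly $i$ edges. For $G,H\in T_{n,m}$, $H$ is $d$-stronger than $G$ if $N_i^d(H)\geq N_i^d(G)$ for every $i\in\{1,\ldots,m\}$ and $N_j^d(H)>N_j^d(G)$ for some $j\in\{1,\ldots,m\}$. *)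

theory Defs
  imports Main
begin

definition tt_graph :: "'a set \<Rightarrow> 'a set set \<Rightarrow> 'a \<Rightarrow> 'a \<Rightarrow> bool" where
  "tt_graph V E s t \<longleftrightarrow> finite V \<and> s \<in> V \<and> t \<in> V \<and> s \<noteq> t \<and>
     (\<forall>e\<in>E. \<exists>x y. e = {x, y} \<and> x \<noteq> y \<and> x \<in> V \<and> y \<in> V)"

definition in_T :: "nat \<Rightarrow> nat \<Rightarrow> 'a set \<Rightarrow> 'a set set \<Rightarrow> 'a \<Rightarrow> 'a \<Rightarrow> bool" where
  "in_T n m V E s t \<longleftrightarrow> tt_graph V E s t \<and> card V = n \<and> card E = m"

definition is_path :: "'a set set \<Rightarrow> 'a \<Rightarrow> 'a \<Rightarrow> 'a list \<Rightarrow> bool" where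
  "is_path F a b xs \<longleftrightarrow> xs \<noteq> [] \<and> distinct xs \<and> hd xs = a \<and> last xs = b \<and>
     (\<forall>i. Suc i < length xs \<longrightarrow> {xs ! i, xs ! Suc i} \<in> F)"

definition d_pathset :: "nat \<Rightarrow> 'a set set \<Rightarrow> 'a \<Rightarrow> 'a \<Rightarrow> 'a set set \<Rightarrow> bool" where
  "d_pathset d E s t F \<longleftrightarrow> F \<subseteq> E \<and> (\<exists>xs. is_path F s t xs \<and> length xs - 1 \<le> d)"

definition N :: "nat \<Rightarrow> nat \<Rightarrow> 'a set set \<Rightarrow> 'a \<Rightarrow> 'a \<Rightarrow> nat" where
  "N d i E s t = card {F. d_pathset d E s t F \<and> card F = i}"

definition d_stronger :: "nat \<Rightarrow> nat \<Rightarrow> 'b set set \<Rightarrow> 'b \<Rightarrow> 'b \<Rightarrow> 'a set set \<Rightarrow> 'a \<Rightarrow> 'a \<Rightarrow> bool" where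
  "d_stronger d m EH sH tH EG sG tG \<longleftrightarrow>
     (\<forall>i\<in>{1..m}. N d i EH sH tH \<ge> N d i EG sG tG) \<and>
     (\<exists>j\<in>{1..m}. N d j EH sH tH > N d j EG sG tG)"

definition adj :: "'a set set \<Rightarrow> 'a \<Rightarrow> 'a \<Rightarrow> bool" where
  "adj E x y \<longleftrightarrow> {x, y} \<in> E"

definition complete_tt :: "'a set \<Rightarrow> 'a set set \<Rightarrow> 'a \<Rightarrow> 'a \<Rightarrow> bool" where
  "complete_tt V E s t \<longleftrightarrow>
     (let C = {x \<in> V. (adj E)\<^sup>*\<^sup>* s x} in
        t \<in> C \<and> (\<forall>x\<in>C. \<forall>y\<in>C. x \<noteq> y \<longrightarrow> {x, y} \<in> E))"

definition degree :: "'a set set \<Rightarrow> 'a \<Rightarrow> nat" where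
  "degree E v = card {u. {u, v} \<in> E}"

end

theory Submission
  imports Defs
begin

(*
  Since v is a pendant vertex at s and s, t lie in the complete component C of G - sv, G has an
  edge e = wx avoiding s, t and v: either some edge lies outside C, or all m - 1 >= 4 edges other
  than sv lie in the clique C, which then has at least four vertices.  Let H = G - e + vt.

  A 3-pathset F of G not containing e is a 3-pathset of H.  If F contains e, then F - e + vt is a
  3-pathset of H unless F - e has no short s-t path and sv is not in F; in that case every short
  s-t path of F is s-w-x-t or s-x-w-t, exactly one of the two occurs, and F is sent to
  F - {e, sa} + {sv, vt} where sa is its first edge.  This map is injective (vt and the surviving
  last edge tell how to undo it) and preserves sizes, and its image misses the pathset {sv, vt}.
*)

lemma all_Suc_less_Cons:
  "(\<forall>i. Suc i < length (a # xs) \<longrightarrow> P i) \<longleftrightarrow>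
     (xs \<noteq> [] \<longrightarrow> P 0) \<and> (\<forall>i. Suc i < length xs \<longrightarrow> P (Suc i))"
  by (cases xs) (auto simp: less_Suc_eq_0_disj)

lemma is_path_Cons_Cons:
  "is_path F a b (a # y # ys) \<longleftrightarrow> {a, y} \<in> F \<and> a \<notin> set (y # ys) \<and> is_path F y b (y # ys)"
  unfolding is_path_def all_Suc_less_Cons[of a "y # ys"] by auto

lemma is_path_singleton: "is_path F a b [c] \<longleftrightarrow> a = c \<and> b = c"
  by (auto simp: is_path_def)

definition has_path3 :: "'a set set \<Rightarrow> 'a \<Rightarrow> 'a \<Rightarrow> bool" where
  "has_path3 F s t \<longleftrightarrow> {s, t} \<in> F \<or>
     (\<exists>y. y \<notin> {s, t} \<and> {s, y} \<in> F \<and> {y, t} \<in> F) \<or>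
     (\<exists>y z. y \<notin> {s, t} \<and> z \<notin> {s, t} \<and> y \<noteq> z \<and> {s, y} \<in> F \<and> {y, z} \<in> F \<and> {z, t} \<in> F)"

lemma has_path3_edgeI: "{s, t} \<in> F \<Longrightarrow> has_path3 F s t"
  and has_path3_2I: "y \<notin> {s, t} \<Longrightarrow> {s, y} \<in> F \<Longrightarrow> {y, t} \<in> F \<Longrightarrow> has_path3 F s t"
  and has_path3_3I: "y \<notin> {s, t} \<Longrightarrow> z \<notin> {s, t} \<Longrightarrow> y \<noteq> z \<Longrightarrow>
      {s, y} \<in> F \<Longrightarrow> {y, z} \<in> F \<Longrightarrow> {z, t} \<in> F \<Longrightarrow> has_path3 F s t"
  unfolding has_path3_def by blast+

lemma has_path3E:
  assumes "has_path3 F s t"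
  obtains (edge) "{s, t} \<in> F"
    | (two) y where "y \<notin> {s, t}" "{s, y} \<in> F" "{y, t} \<in> F"
    | (three) y z where "y \<notin> {s, t}" "z \<notin> {s, t}" "y \<noteq> z"
        "{s, y} \<in> F" "{y, z} \<in> F" "{z, t} \<in> F"
  using assms unfolding has_path3_def by blast

lemma short_path_iff_has_path3:
  assumes "s \<noteq> t"
  shows "(\<exists>xs. is_path F s t xs \<and> length xs - 1 \<le> 3) \<longleftrightarrow> has_path3 F s t"
proof
  assume "\<exists>xs. is_path F s t xs \<and> length xs - 1 \<le> 3"
  then obtain xs where path: "is_path F s t xs" and "length xs \<le> 4" by fastforce
  moreover have "xs \<noteq> []" "hd xs = s" using path by (auto simp: is_path_def)
  ultimately obtain ys where "xs = s # ys" "length ys \<le> 3" by (cases xs) auto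
  then consider "xs = [s]" | b where "xs = [s, b]" | b c where "xs = [s, b, c]"
    | b c d where "xs = [s, b, c, d]"
    by (auto simp: le_Suc_eq length_Suc_conv numeral_eq_Suc)
  then show "has_path3 F s t"
    using path assms by cases (auto simp: is_path_Cons_Cons is_path_singleton has_path3_def)
next
  assume "has_path3 F s t"
  then show "\<exists>xs. is_path F s t xs \<and> length xs - 1 \<le> 3"
  proof (cases rule: has_path3E)
    case edge
    then show ?thesis
      using assms by (intro exI[of _ "[s, t]"]) (auto simp: is_path_Cons_Cons is_path_singleton)
  next
    case (two y)
    then show ?thesis
      using assms by (intro exI[of _ "[s, y, t]"]) (auto simp: is_path_Cons_Cons is_path_singleton)
  next
    case (three y z)
    then show ?thesis
      using assms by (intro exI[of _ "[s, y, z, t]"]) (auto simp: is_path_Cons_Cons is_path_singleton)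
  qed
qed

lemma d_pathset_3_iff:
  assumes "s \<noteq> t"
  shows "d_pathset 3 E s t F \<longleftrightarrow> F \<subseteq> E \<and> has_path3 F s t"
  unfolding d_pathset_def short_path_iff_has_path3[OF assms] ..

lemma has_path3_mono: "has_path3 F s t \<Longrightarrow> F \<subseteq> F' \<Longrightarrow> has_path3 F' s t"
  unfolding has_path3_def by blast

lemma has_path3_edge_at_target: "has_path3 F s t \<Longrightarrow> \<exists>y. {y, t} \<in> F"
  by (erule has_path3E) blast+

lemma has_path3_Diff_pendant_edge:
  assumes "has_path3 F s t" "s \<noteq> t" "v \<notin> {s, t}" "\<And>u. {u, v} \<in> F \<Longrightarrow> u = s"
  shows "has_path3 (F - {{s, v}}) s t"
  using assms(1)
proof (cases rule: has_path3E)
  case edge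
  then show ?thesis using assms(3) by (intro has_path3_edgeI) (auto simp: doubleton_eq_iff)
next
  case (two y)
  moreover have "y \<noteq> v" using two assms(2) assms(4)[of t] by (auto simp: insert_commute)
  ultimately show ?thesis
    using assms(3) by (intro has_path3_2I[of y]) (auto simp: doubleton_eq_iff)
next
  case (three y z)
  moreover have "y \<noteq> v" "z \<noteq> v"
    using three assms(2) assms(4)[of z] assms(4)[of t] by (auto simp: insert_commute)
  ultimately show ?thesis
    using assms(3) by (intro has_path3_3I[where y = y and z = z]) (auto simp: doubleton_eq_iff)
qed

lemma has_path3_insert_edge:
  assumes "has_path3 (insert {w, x} F) s t" "w \<notin> {s, t}" "x \<notin> {s, t}"
  shows "has_path3 F s t \<or> {s, w} \<in> F \<and> {x, t} \<in> F \<or> {s, x} \<in> F \<and> {w, t} \<in> F"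
proof -
  have s_edge: "{s, y} \<in> insert {w, x} F \<Longrightarrow> {s, y} \<in> F"
    and t_edge: "{y, t} \<in> insert {w, x} F \<Longrightarrow> {y, t} \<in> F" for y
    using assms(2,3) by (auto simp: doubleton_eq_iff)
  from assms(1) show ?thesis
  proof (cases rule: has_path3E)
    case edge
    then show ?thesis by (intro disjI1 has_path3_edgeI t_edge)
  next
    case (two y)
    then have "{s, y} \<in> F" "{y, t} \<in> F" using s_edge[of y] t_edge[of y] by simp_all
    then show ?thesis using two(1) by (simp add: has_path3_2I)
  next
    case (three y z)
    then have "{s, y} \<in> F" "{z, t} \<in> F" using s_edge[of y] t_edge[of z] by simp_all
    show ?thesis
    proof (cases "{y, z} = {w, x}")
      case True
      then have "y = w \<and> z = x \<or> y = x \<and> z = w" by (auto simp: doubleton_eq_iff)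
      then show ?thesis using \<open>{s, y} \<in> F\<close> \<open>{z, t} \<in> F\<close> by blast
    next
      case False
      then have "{y, z} \<in> F" using three(5) by simp
      then show ?thesis
        using three(1-3) \<open>{s, y} \<in> F\<close> \<open>{z, t} \<in> F\<close> by (simp add: has_path3_3I)
    qed
  qed
qed

lemma has_path3_uses_entry:
  assumes "has_path3 F s t" "\<not> has_path3 (F - {{w, x}}) s t" "w \<notin> {s, t}" "x \<notin> {s, t}"
  shows "{s, w} \<in> F \<and> {x, t} \<in> F \<or> {s, x} \<in> F \<and> {w, t} \<in> F"
proof -
  have "has_path3 (insert {w, x} (F - {{w, x}})) s t"
    using assms(1) by (rule has_path3_mono) blast
  then show ?thesis
    using has_path3_insert_edge[OF _ assms(3,4)] assms(2) by blast
qed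

lemma has_path3_critical_edge:
  assumes "has_path3 F s t" "\<not> has_path3 (F - {{w, x}}) s t" "w \<notin> {s, t}" "x \<notin> {s, t}"
  shows "{s, w} \<in> F \<and> {x, t} \<in> F \<and> {s, x} \<notin> F \<and> {w, t} \<notin> F \<or>
         {s, x} \<in> F \<and> {w, t} \<in> F \<and> {s, w} \<notin> F \<and> {x, t} \<notin> F"
proof -
  have "\<not> ({s, y} \<in> F \<and> {y, t} \<in> F)" if "y \<in> {w, x}" for y
  proof
    assume "{s, y} \<in> F \<and> {y, t} \<in> F"
    moreover have "{s, y} \<noteq> {w, x}" "{y, t} \<noteq> {w, x}"
      using that assms(3,4) by (auto simp: doubleton_eq_iff)
    ultimately have "has_path3 (F - {{w, x}}) s t"
      using that assms(3,4) by (intro has_path3_2I[where y = y]) auto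
    with assms(2) show False ..
  qed
  then show ?thesis
    using has_path3_uses_entry[OF assms] by blast
qed

lemma d_stronger_by_injection:
  fixes \<Phi> :: "'a set set \<Rightarrow> 'b set set" and d m :: nat and EG :: "'a set set" and s t :: 'a
  defines "PG \<equiv> {F. d_pathset d EG s t F}"
  assumes "finite EH"
    and into: "\<And>F. F \<in> PG \<Longrightarrow> d_pathset d EH s' t' (\<Phi> F) \<and> card (\<Phi> F) = card F"
    and "inj_on \<Phi> PG"
    and X: "d_pathset d EH s' t' X" "X \<notin> \<Phi> ` PG" "card X \<in> {1..m}"
  shows "d_stronger d m EH s' t' EG s t"
proof -
  define PG_i where "PG_i i = {F \<in> PG. card F = i}" for i
  define PH_i where "PH_i i = {F. d_pathset d EH s' t' F \<and> card F = i}" for i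
  have N_EG: "N d i EG s t = card (PG_i i)" and N_EH: "N d i EH s' t' = card (PH_i i)" for i
    by (simp_all add: N_def PG_def PG_i_def PH_i_def)
  have finite_PH: "finite (PH_i i)" for i
    by (rule finite_subset[of _ "Pow EH"]) (auto simp: PH_i_def d_pathset_def \<open>finite EH\<close>)
  have image_PG: "\<Phi> ` PG_i i \<subseteq> PH_i i" for i
    using into by (auto simp: PG_i_def PH_i_def)
  have inj: "inj_on \<Phi> (PG_i i)" for i
    using \<open>inj_on \<Phi> PG\<close> by (rule inj_on_subset) (auto simp: PG_i_def)
  have le: "card (PG_i i) \<le> card (PH_i i)" for i
    using card_inj_on_le[OF inj image_PG finite_PH] .
  have "X \<in> PH_i (card X)" "X \<notin> \<Phi> ` PG_i (card X)"
    using X(1,2) by (auto simp: PG_i_def PH_i_def)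
  then have "\<Phi> ` PG_i (card X) \<subset> PH_i (card X)"
    using image_PG by blast
  then have "card (PG_i (card X)) < card (PH_i (card X))"
    using psubset_card_mono[OF finite_PH] card_image[OF inj] by metis
  then show ?thesis
    unfolding d_stronger_def N_EG N_EH using le X(3) by blast
qed

lemma card_insert_Diff_exchange:
  assumes "finite A" "a \<in> A" "b \<notin> A"
  shows "card (insert b (A - {a})) = card A"
  using assms card_Suc_Diff1[OF assms(1,2)] by simp

lemma insert_Diff_pair_cancel:
  assumes "e \<in> F" "g \<in> F" "e \<noteq> g" "a \<notin> F" "b \<notin> F" "a \<noteq> b"
  shows "insert e (insert a (insert b (F - {e, g})) - {b}) = insert a (F - {g})"
    and "insert e (insert g (insert a (insert b (F - {e, g})) - {a, b})) = F"
  using assms by blast+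

locale pendant_swap =
  fixes E :: "'a set set" and s t v w x :: 'a
  assumes finite_E: "finite E"
    and s_ne_t: "s \<noteq> t"
    and v_notin: "v \<notin> {s, t}"
    and pendant: "\<And>u. {u, v} \<in> E \<longleftrightarrow> u = s"
    and wx_in_E: "{w, x} \<in> E"
    and w_notin: "w \<notin> {s, t, v}" and x_notin: "x \<notin> {s, t, v}" and w_ne_x: "w \<noteq> x"
begin

lemma sv_in_E: "{s, v} \<in> E"
  using pendant[of s] by (simp add: insert_commute)

lemma vt_notin_E: "{v, t} \<notin> E"
  using pendant[of t] s_ne_t by (simp add: insert_commute)

lemma edges_distinct [simp]:
  "{w, x} \<noteq> {v, t}" "{w, x} \<noteq> {s, v}" "{s, v} \<noteq> {v, t}"
  "{s, w} \<noteq> {w, x}" "{s, x} \<noteq> {w, x}" "{s, w} \<noteq> {s, v}" "{s, x} \<noteq> {s, v}"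
  "{s, w} \<noteq> {v, t}" "{s, x} \<noteq> {v, t}" "{s, w} \<noteq> {s, x}"
  "{x, t} \<noteq> {w, x}" "{x, t} \<noteq> {s, v}" "{x, t} \<noteq> {v, t}" "{x, t} \<noteq> {s, w}" "{x, t} \<noteq> {s, x}"
  "{w, t} \<noteq> {w, x}" "{w, t} \<noteq> {s, v}" "{w, t} \<noteq> {v, t}" "{w, t} \<noteq> {s, w}" "{w, t} \<noteq> {s, x}"
  using s_ne_t v_notin w_notin x_notin w_ne_x by (auto simp: doubleton_eq_iff)

lemmas edges_distinct' [simp] = edges_distinct[THEN not_sym]

lemma has_path3_via_v: "{s, v} \<in> F \<Longrightarrow> {v, t} \<in> F \<Longrightarrow> has_path3 F s t"
  using v_notin by (rule has_path3_2I)

lemma not_has_path3_insert_sv: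
  assumes "F \<subseteq> E" "\<not> has_path3 F s t"
  shows "\<not> has_path3 (insert {s, v} F) s t"
proof
  have only_sv: "u = s" if "{u, v} \<in> insert {s, v} F" for u
  proof -
    have "{u, v} \<in> E" using that assms(1) sv_in_E by auto
    then show ?thesis by (simp add: pendant)
  qed
  assume "has_path3 (insert {s, v} F) s t"
  then have "has_path3 (insert {s, v} F - {{s, v}}) s t"
    using s_ne_t v_notin only_sv by (rule has_path3_Diff_pendant_edge)
  then have "has_path3 F s t"
    by (rule has_path3_mono) blast
  with assms(2) show False ..
qed

definition swapped_edges :: "'a set set" where
  "swapped_edges = insert {v, t} (E - {{w, x}})"

definition entry_edge :: "'a set set \<Rightarrow> 'a set" where
  "entry_edge F = (if {s, w} \<in> F then {s, w} else {s, x})"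

definition swap :: "'a set set \<Rightarrow> 'a set set" where
  "swap F =
    (if {w, x} \<notin> F then F
     else if has_path3 (F - {{w, x}}) s t \<or> {s, v} \<in> F then insert {v, t} (F - {{w, x}})
     else insert {s, v} (insert {v, t} (F - {{w, x}, entry_edge F})))"

definition unswap :: "'a set set \<Rightarrow> 'a set set" where
  "unswap R =
    (if {v, t} \<notin> R then R
     else if has_path3 (insert {w, x} (R - {{v, t}})) s t then insert {w, x} (R - {{v, t}})
     else insert {w, x} (insert (if {x, t} \<in> R then {s, w} else {s, x}) (R - {{s, v}, {v, t}})))"

lemma swap_cases:
  obtains (keep) "{w, x} \<notin> F" "swap F = F"
  | (exchange) "{w, x} \<in> F" "has_path3 (F - {{w, x}}) s t \<or> {s, v} \<in> F"
      "swap F = insert {v, t} (F - {{w, x}})"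
  | (reroute) "{w, x} \<in> F" "\<not> has_path3 (F - {{w, x}}) s t" "{s, v} \<notin> F"
      "swap F = insert {s, v} (insert {v, t} (F - {{w, x}, entry_edge F}))"
proof (cases "{w, x} \<in> F")
  case False
  then show ?thesis by (intro keep) (simp_all add: swap_def)
next
  case True
  show ?thesis
  proof (cases "has_path3 (F - {{w, x}}) s t \<or> {s, v} \<in> F")
    case False
    then show ?thesis using True by (intro reroute) (simp_all add: swap_def)
  qed (use True in \<open>simp add: exchange swap_def\<close>)
qed

lemma entry_edge_cases: "entry_edge F = {s, w} \<or> entry_edge F = {s, x}"
  by (simp add: entry_edge_def)

lemma entry_edge_reroute:
  assumes "F \<subseteq> E" "has_path3 F s t" "\<not> has_path3 (F - {{w, x}}) s t"
  shows "entry_edge F \<in> F"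
    and "{x, t} \<in> F \<longleftrightarrow> entry_edge F = {s, w}"
    and "{x, t} \<in> F \<or> {w, t} \<in> F"
    and "\<not> has_path3 (insert {s, v} (F - {entry_edge F})) s t"
proof -
  have wx: "w \<notin> {s, t}" "x \<notin> {s, t}" using w_notin x_notin by auto
  have "entry_edge F \<in> F \<and> ({x, t} \<in> F \<longleftrightarrow> entry_edge F = {s, w}) \<and>
      ({x, t} \<in> F \<or> {w, t} \<in> F) \<and> {s, w} \<notin> F - {entry_edge F} \<and> {s, x} \<notin> F - {entry_edge F}"
    using has_path3_critical_edge[OF assms(2,3) wx]
    by (elim disjE conjE) (simp_all add: entry_edge_def)
  then have no_entry: "{s, w} \<notin> F - {entry_edge F}" "{s, x} \<notin> F - {entry_edge F}"
    and "entry_edge F \<in> F" "{x, t} \<in> F \<longleftrightarrow> entry_edge F = {s, w}" "{x, t} \<in> F \<or> {w, t} \<in> F"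
    by blast+
  then show "entry_edge F \<in> F" "{x, t} \<in> F \<longleftrightarrow> entry_edge F = {s, w}" "{x, t} \<in> F \<or> {w, t} \<in> F"
    by blast+
  have "\<not> has_path3 (F - {entry_edge F}) s t"
  proof
    assume "has_path3 (F - {entry_edge F}) s t"
    moreover have "\<not> has_path3 (F - {entry_edge F} - {{w, x}}) s t"
      using assms(3) has_path3_mono[of "F - {entry_edge F} - {{w, x}}" s t "F - {{w, x}}"] by blast
    ultimately show False
      using has_path3_uses_entry[OF _ _ wx] no_entry by blast
  qed
  then show "\<not> has_path3 (insert {s, v} (F - {entry_edge F})) s t"
    using assms(1) by (intro not_has_path3_insert_sv) auto
qed

lemma swap_subset: "F \<subseteq> E \<Longrightarrow> swap F \<subseteq> swapped_edges"
  by (cases rule: swap_cases[of F]) (auto simp: swapped_edges_def sv_in_E)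

lemma has_path3_swap: "has_path3 F s t \<Longrightarrow> has_path3 (swap F) s t"
proof (cases rule: swap_cases[of F])
  case exchange
  then show ?thesis by (auto intro: has_path3_via_v elim: has_path3_mono)
qed (simp_all add: has_path3_via_v)

lemma card_swap:
  assumes "F \<subseteq> E" "has_path3 F s t"
  shows "card (swap F) = card F"
proof -
  have "finite F" using assms(1) finite_E by (rule finite_subset)
  have "{v, t} \<notin> F" using assms(1) vt_notin_E by blast
  show ?thesis
  proof (cases rule: swap_cases[of F])
    case exchange
    then show ?thesis
      using card_insert_Diff_exchange[OF \<open>finite F\<close> _ \<open>{v, t} \<notin> F\<close>] by simp
  next
    case reroute
    have "{{w, x}, entry_edge F} \<subseteq> F"
      using reroute(1) entry_edge_reroute(1)[OF assms reroute(2)] by simp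
    moreover have "card {{w, x}, entry_edge F} = 2"
      using entry_edge_cases[of F] by auto
    ultimately have "card (F - {{w, x}, entry_edge F}) = card F - 2" "2 \<le> card F"
      using \<open>finite F\<close> card_mono[OF \<open>finite F\<close>, of "{{w, x}, entry_edge F}"]
      by (simp_all add: card_Diff_subset)
    then show ?thesis
      using reroute(3,4) \<open>finite F\<close> \<open>{v, t} \<notin> F\<close> by simp
  qed simp
qed

lemma unswap_swap:
  assumes "F \<subseteq> E" "has_path3 F s t"
  shows "unswap (swap F) = F"
proof -
  have "{v, t} \<notin> F" using assms(1) vt_notin_E by blast
  show ?thesis
  proof (cases rule: swap_cases[of F])
    case keep
    then show ?thesis using \<open>{v, t} \<notin> F\<close> by (simp add: unswap_def)
  next
    case exchange
    then have "insert {w, x} (swap F - {{v, t}}) = F"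
      using \<open>{v, t} \<notin> F\<close> by (simp add: Diff_insert_absorb insert_absorb)
    then show ?thesis using exchange(3) assms(2) by (simp add: unswap_def)
  next
    case reroute
    note entry = entry_edge_reroute[OF assms reroute(2)]
    have g: "{w, x} \<noteq> entry_edge F" "{x, t} \<noteq> entry_edge F"
      using entry_edge_cases[of F] by auto
    note cancel = insert_Diff_pair_cancel[OF reroute(1) entry(1) g(1) reroute(3)
        \<open>{v, t} \<notin> F\<close> edges_distinct(3)]
    have "{x, t} \<in> swap F \<longleftrightarrow> entry_edge F = {s, w}"
      using reroute(4) g(2) entry(2) by simp
    then have "(if {x, t} \<in> swap F then {s, w} else {s, x}) = entry_edge F"
      using entry_edge_cases[of F] by metis
    moreover have "insert {w, x} (swap F - {{v, t}}) = insert {s, v} (F - {entry_edge F})"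
      using reroute(4) cancel(1) by simp
    moreover have "insert {w, x} (insert (entry_edge F) (swap F - {{s, v}, {v, t}})) = F"
      using reroute(4) cancel(2) by simp
    ultimately show ?thesis
      using reroute(4) entry(4) by (simp add: unswap_def)
  qed
qed

lemma swap_ne_sv_vt:
  assumes "F \<subseteq> E" "has_path3 F s t"
  shows "swap F \<noteq> {{s, v}, {v, t}}"
proof -
  obtain y where y: "{y, t} \<in> F" using has_path3_edge_at_target[OF assms(2)] ..
  have "{y, t} \<noteq> {s, v}" "{y, t} \<noteq> {w, x}"
    using s_ne_t v_notin w_notin x_notin by (auto simp: doubleton_eq_iff)
  moreover have "{y, t} \<noteq> {v, t}" using y assms(1) vt_notin_E by auto
  ultimately have y_other: "{y, t} \<notin> {{s, v}, {v, t}}" and "{y, t} \<noteq> {w, x}"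
    by simp_all
  have "\<exists>e \<in> swap F. e \<notin> {{s, v}, {v, t}}"
  proof (cases rule: swap_cases[of F])
    case keep
    then show ?thesis using y y_other by (intro bexI[of _ "{y, t}"]) simp_all
  next
    case exchange
    then show ?thesis
      using y y_other \<open>{y, t} \<noteq> {w, x}\<close> by (intro bexI[of _ "{y, t}"]) simp_all
  next
    case reroute
    have "{x, t} \<noteq> entry_edge F" "{w, t} \<noteq> entry_edge F"
      using entry_edge_cases[of F] by auto
    with entry_edge_reroute(3)[OF assms reroute(2)]
    have "{x, t} \<in> swap F \<or> {w, t} \<in> swap F"
      using reroute(4) by simp
    then show ?thesis
      by (elim disjE) (simp_all add: bexI[of _ "{x, t}"] bexI[of _ "{w, t}"])
  qed
  then show ?thesis by auto
qed

theorem d_stronger_swapped_edges: "d_stronger 3 (card E) swapped_edges s t E s t"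
proof (rule d_stronger_by_injection[where \<Phi> = swap and X = "{{s, v}, {v, t}}"])
  show "finite swapped_edges" using finite_E by (simp add: swapped_edges_def)
  show "d_pathset 3 swapped_edges s t (swap F) \<and> card (swap F) = card F"
    if "F \<in> {F. d_pathset 3 E s t F}" for F
    using that swap_subset has_path3_swap card_swap by (simp add: d_pathset_3_iff[OF s_ne_t])
  show "inj_on swap {F. d_pathset 3 E s t F}"
    using unswap_swap
    by (intro inj_on_inverseI[where g = unswap]) (simp add: d_pathset_3_iff[OF s_ne_t])
  show "d_pathset 3 swapped_edges s t {{s, v}, {v, t}}"
    using sv_in_E by (simp add: d_pathset_3_iff[OF s_ne_t] swapped_edges_def has_path3_via_v)
  show "{{s, v}, {v, t}} \<notin> swap ` {F. d_pathset 3 E s t F}"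
    using swap_ne_sv_vt by (auto simp: d_pathset_3_iff[OF s_ne_t])
  have "card {{s, v}, {w, x}} \<le> card E"
    using sv_in_E wx_in_E finite_E by (intro card_mono) auto
  then show "card {{s, v}, {v, t}} \<in> {1..card E}" by simp
qed

end

lemma tt_graph_edgeE:
  assumes "tt_graph V E s t" "e \<in> E"
  obtains x y where "e = {x, y}" "x \<noteq> y" "x \<in> V" "y \<in> V"
proof -
  have "\<forall>e\<in>E. \<exists>x y. e = {x, y} \<and> x \<noteq> y \<and> x \<in> V \<and> y \<in> V"
    using assms(1) by (simp add: tt_graph_def)
  from bspec[OF this assms(2)] show ?thesis using that by blast
qed

lemma tt_graph_edge_ends_distinct:
  assumes "tt_graph V E s t" "{a, b} \<in> E"
  shows "a \<noteq> b"
  using assms by (rule tt_graph_edgeE) (auto simp: doubleton_eq_iff)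

lemma tt_graph_edges_subset_Pow: "tt_graph V E s t \<Longrightarrow> E \<subseteq> Pow V"
  unfolding tt_graph_def by fastforce

lemma tt_graph_edge_ends_in: "tt_graph V E s t \<Longrightarrow> {a, b} \<in> E \<Longrightarrow> b \<in> V"
  using tt_graph_edges_subset_Pow by fastforce

lemma tt_graph_finite_edges:
  assumes "tt_graph V E s t"
  shows "finite E"
proof (rule finite_subset)
  show "E \<subseteq> Pow V" using assms by (rule tt_graph_edges_subset_Pow)
  show "finite (Pow V)" using assms by (simp add: tt_graph_def)
qed

lemma tt_graph_Diff: "tt_graph V E s t \<Longrightarrow> tt_graph V (E - A) s t"
  unfolding tt_graph_def by blast

lemma tt_graph_insert_edge:
  assumes "tt_graph V E s t" "u \<in> V" "u \<noteq> t"
  shows "tt_graph V (insert {u, t} E) s t"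
  using assms unfolding tt_graph_def by fastforce

lemma in_T_exchange_edge:
  assumes "in_T n m V E s t" "e \<in> E" "{v, t} \<notin> E" "v \<in> V" "v \<noteq> t"
  shows "in_T n m V (insert {v, t} (E - {e})) s t"
proof -
  have G: "tt_graph V E s t" "card V = n" "card E = m"
    using assms(1) by (simp_all add: in_T_def)
  have "card (insert {v, t} (E - {e})) = m"
    using card_insert_Diff_exchange[OF tt_graph_finite_edges[OF G(1)] assms(2,3)] G(3) by simp
  then show ?thesis
    using tt_graph_insert_edge[OF tt_graph_Diff[OF G(1)] assms(4,5)] G(2) by (simp add: in_T_def)
qed

lemma degree_one_neighbour_iff:
  assumes "degree E v = 1" "{s, v} \<in> E"
  shows "{u, v} \<in> E \<longleftrightarrow> u = s"
proof -
  obtain a where "{u. {u, v} \<in> E} = {a}"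
    using assms(1) card_1_singletonE unfolding degree_def by blast
  with assms(2) have "{u. {u, v} \<in> E} = {s}" by auto
  then show ?thesis by blast
qed

lemma four_le_card_if_many_pairs:
  assumes "finite C" "P \<subseteq> {B. B \<subseteq> C \<and> card B = 2}" "4 \<le> card P"
  shows "4 \<le> card C"
proof (rule ccontr)
  assume "\<not> 4 \<le> card C"
  then have "card C * (card C - 1) \<le> 3 * 2" by (intro mult_le_mono) auto
  then have "card C choose 2 \<le> 3" by (simp add: choose_two)
  moreover have "card P \<le> card C choose 2"
    using card_mono[OF _ assms(2)] assms(1) by (simp add: n_subsets)
  ultimately show False using assms(3) by simp
qed

lemma two_elements_outside_pair:
  assumes "finite C" "4 \<le> card C"
  obtains w x where "w \<in> C - {s, t}" "x \<in> C - {s, t}" "w \<noteq> x"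
proof -
  have "card {s, t} \<le> 2" by (simp add: card_insert_if)
  then have "2 \<le> card (C - {s, t})"
    using diff_card_le_card_Diff[of "{s, t}" C] assms(2) by simp
  then show ?thesis using that by (auto simp: numeral_2_eq_2 card_le_Suc_iff)
qed

lemma complete_tt_component:
  assumes "tt_graph V E s t" "complete_tt V E s t"
  obtains C where "finite C" "s \<in> C" "t \<in> C"
    and "\<And>x y. x \<in> C \<Longrightarrow> y \<in> C \<Longrightarrow> x \<noteq> y \<Longrightarrow> {x, y} \<in> E"
    and "\<And>y z. y \<in> C \<Longrightarrow> {y, z} \<in> E \<Longrightarrow> z \<in> C"
    and "\<And>y. y \<in> C \<Longrightarrow> (adj E)\<^sup>*\<^sup>* s y"
proof
  let ?C = "{y \<in> V. (adj E)\<^sup>*\<^sup>* s y}"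
  show "finite ?C" "s \<in> ?C" using assms(1) by (simp_all add: tt_graph_def)
  show "t \<in> ?C" "\<And>x y. x \<in> ?C \<Longrightarrow> y \<in> ?C \<Longrightarrow> x \<noteq> y \<Longrightarrow> {x, y} \<in> E"
    using assms(2) by (simp_all add: complete_tt_def Let_def)
  show "z \<in> ?C" if "y \<in> ?C" "{y, z} \<in> E" for y z
  proof -
    have "(adj E)\<^sup>*\<^sup>* s y" "adj E y z" using that by (simp_all add: adj_def)
    then have "(adj E)\<^sup>*\<^sup>* s z" by (rule rtranclp.rtrancl_into_rtrancl)
    moreover have "z \<in> V" using tt_graph_edge_ends_in[OF assms(1) that(2)] .
    ultimately show ?thesis by simp
  qed
  show "(adj E)\<^sup>*\<^sup>* s y" if "y \<in> ?C" for y
    using that by simp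
qed

lemma pendant_unreachable:
  assumes "(adj (E - {{s, v}}))\<^sup>*\<^sup>* s y" "\<And>u. {u, v} \<in> E \<Longrightarrow> u = s" "v \<noteq> s"
  shows "y \<noteq> v"
  using assms(1)
proof (induction rule: rtranclp_induct)
  case (step y z)
  then show ?case using assms(2)[of y] by (auto simp: adj_def)
qed (use assms(3) in simp)

lemma far_edge_leaving_component:
  assumes "{w, x} \<in> E - {{s, v}}" "\<not> {w, x} \<subseteq> C" "s \<in> C" "t \<in> C"
    and closed: "\<And>y z. y \<in> C \<Longrightarrow> {y, z} \<in> E - {{s, v}} \<Longrightarrow> z \<in> C"
    and pendant: "\<And>u. {u, v} \<in> E \<longleftrightarrow> u = s"
  shows "w \<notin> {s, t, v}" "x \<notin> {s, t, v}"
proof -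
  have "{x, w} \<in> E - {{s, v}}" using assms(1) by (simp add: insert_commute)
  then have "w \<notin> C" "x \<notin> C"
    using assms(1,2) closed[of w x] closed[of x w] by auto
  moreover have "w \<noteq> v"
  proof
    assume "w = v"
    then have "{x, v} \<in> E" using assms(1) by (simp add: insert_commute)
    with \<open>x \<notin> C\<close> \<open>s \<in> C\<close> show False by (simp add: pendant)
  qed
  moreover have "x \<noteq> v"
  proof
    assume "x = v"
    then have "{w, v} \<in> E" using assms(1) by simp
    with \<open>w \<notin> C\<close> \<open>s \<in> C\<close> show False by (simp add: pendant)
  qed
  ultimately show "w \<notin> {s, t, v}" "x \<notin> {s, t, v}" using assms(3,4) by auto
qed

lemma pendant_complete_far_edge:
  assumes G: "tt_graph V E s t" and many: "5 \<le> card E"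
    and pendant: "\<And>u. {u, v} \<in> E \<longleftrightarrow> u = s"
    and complete: "complete_tt V (E - {{s, v}}) s t"
  shows "v \<noteq> t" and "\<exists>w x. {w, x} \<in> E \<and> w \<noteq> x \<and> w \<notin> {s, t, v} \<and> x \<notin> {s, t, v}"
proof -
  define E' where "E' = E - {{s, v}}"
  have G': "tt_graph V E' s t" using G by (simp add: E'_def tt_graph_Diff)
  have "{s, v} \<in> E" using pendant[of s] by (simp add: insert_commute)
  then have "v \<noteq> s" using tt_graph_edge_ends_distinct[OF G] by blast
  obtain C where "finite C" "s \<in> C" "t \<in> C"
    and clique: "\<And>x y. x \<in> C \<Longrightarrow> y \<in> C \<Longrightarrow> x \<noteq> y \<Longrightarrow> {x, y} \<in> E'"
    and closed: "\<And>y z. y \<in> C \<Longrightarrow> {y, z} \<in> E' \<Longrightarrow> z \<in> C"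
    and reach: "\<And>y. y \<in> C \<Longrightarrow> (adj E')\<^sup>*\<^sup>* s y"
    using complete_tt_component[OF G'] complete unfolding E'_def by blast
  have "v \<notin> C"
    using reach[of v] pendant_unreachable[of E s v v] pendant \<open>v \<noteq> s\<close> unfolding E'_def by blast
  then show "v \<noteq> t" using \<open>t \<in> C\<close> by blast
  show "\<exists>w x. {w, x} \<in> E \<and> w \<noteq> x \<and> w \<notin> {s, t, v} \<and> x \<notin> {s, t, v}"
  proof (cases "E' \<subseteq> {B. B \<subseteq> C \<and> card B = 2}")
    case True
    have "card E' = card E - 1"
      using \<open>{s, v} \<in> E\<close> tt_graph_finite_edges[OF G] by (simp add: E'_def)
    then have "4 \<le> card C"
      using four_le_card_if_many_pairs[OF \<open>finite C\<close> True] many by simp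
    with \<open>finite C\<close> obtain w x where "w \<in> C - {s, t}" "x \<in> C - {s, t}" "w \<noteq> x"
      by (rule two_elements_outside_pair)
    moreover have "{w, x} \<in> E" using clique calculation unfolding E'_def by blast
    ultimately show ?thesis using \<open>v \<notin> C\<close> by (intro exI[of _ w] exI[of _ x]) auto
  next
    case False
    then obtain e where "e \<in> E'" "\<not> (e \<subseteq> C \<and> card e = 2)" by blast
    moreover obtain w x where "e = {w, x}" "w \<noteq> x"
      using G' \<open>e \<in> E'\<close> by (rule tt_graph_edgeE)
    ultimately have "{w, x} \<in> E'" "\<not> {w, x} \<subseteq> C" by auto
    note far = far_edge_leaving_component[OF this[unfolded E'_def] \<open>s \<in> C\<close> \<open>t \<in> C\<close>
        closed[unfolded E'_def] pendant]
    show ?thesis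
      using \<open>{w, x} \<in> E'\<close> \<open>w \<noteq> x\<close> far unfolding E'_def by (intro exI[of _ w] exI[of _ x]) simp
  qed
qed

theorem lemma7:
  fixes V :: "'a set" and E :: "'a set set" and s t v :: 'a and n m :: nat
  assumes "n \<ge> 5" and "m \<ge> 5"
    and "in_T n m V E s t"
    and "v \<in> V" and "degree E v = 1" and "{s, v} \<in> E"
    and "complete_tt V (E - {{s, v}}) s t"
  shows "\<exists>(VH :: 'a set) EH sH tH. in_T n m VH EH sH tH \<and> d_stronger 3 m EH sH tH E s t"
proof -
  have G: "tt_graph V E s t" and "card E = m" using assms(3) by (simp_all add: in_T_def)
  have pendant: "\<And>u. {u, v} \<in> E \<longleftrightarrow> u = s" using assms(5,6) by (rule degree_one_neighbour_iff)
  note far = pendant_complete_far_edge[OF G _ pendant assms(7)]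
  from far(2) \<open>card E = m\<close> assms(2) obtain w x
    where "{w, x} \<in> E" "w \<noteq> x" "w \<notin> {s, t, v}" "x \<notin> {s, t, v}" by auto
  moreover have "v \<noteq> t" "s \<noteq> t" "v \<noteq> s"
    using far(1) \<open>card E = m\<close> assms(2) G tt_graph_edge_ends_distinct[OF G assms(6)]
    by (auto simp: tt_graph_def)
  ultimately interpret pendant_swap E s t v w x
    using tt_graph_finite_edges[OF G] pendant by unfold_locales auto
  have "in_T n m V swapped_edges s t"
    unfolding swapped_edges_def using assms(3) wx_in_E vt_notin_E assms(4) \<open>v \<noteq> t\<close>
    by (rule in_T_exchange_edge)
  then show ?thesis using d_stronger_swapped_edges \<open>card E = m\<close> by blast
qed

end
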